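(* Let $G=(V,E)$ be a connected undirected graph on $V=\{1,\dots,m\}$ without self-loops, with adjacency matrix $H$ ($h^i_j=1$ if $(i,j)\in E$, else $0$), Laplacian $\mathcal{L}=\Delta-H$ ($\Delta$ the diagonal degree matrix) and maximum degree $\Delta_{\max}$. Fix $0<c<1/\Delta_{\max}$ and let the priority vectors $w^i(k)=(w^i_1(k),\dots,w^i_m(k))$, $i=1,\dots,m$, evolve by $$w^i(k+1)=w^i(k)+c\sum_{j=1}^m h^i_j\,(w^j(k)-w^i(k)),$$ where each initial vector $w^i(0)$ has entries in $(0,1)$ summing to $1$. Define for every $k\ge 0$ the weights $a^i_j(k)=w^i_j(k)$ if $(i,j)\in E$; $a^i_i(k)=w^i_i(k)+\sum_{j\neq i,\,(i,j)\notin E} w^i_j(k)$; and $a^i_j(k)=0$ if $j\neq i$ and $(i,j)\notin E$. Let $\mu_0=\min_{i,j\in\{1,\dots,m\}} w^i_j(0)$. Then: (1) $a^i_i(k)\ge \mu_0$ for all $k\ge 0$ and all $i$; (2) $a^i_j(k)\ge \mu_0$ for all $k\ge 0$ and all $(i,j)\in E$; (3) $a^i_j(k)=0$ for all $k$ whenever $j\neq i$ and $(i,j)\notin E$.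
   Context: Agent $i$'s priority vector $w^i(k)$ assigns a priority $w^i_j(k)$ to the objective of every agent $j$. At the network level, $W(k+1)=(I-c\mathcal{L})W(k)$ where $W(k)$ is the matrix whose $i$-th row is $w^i(k)$. The weight $a^i_j(k)$ is the weight agent $i$ assigns to information from agent $j$ at iteration $k$: agent $i$ keeps its priority for neighbors, puts zero weight on non-neighbors, and adds the priorities of non-neighbors to its own self-weight. By convention $(i,i)\notin E$. *)

theory Defs
  imports Complex_Main
begin

definition undirected_graph :: "nat \<Rightarrow> (nat \<Rightarrow> nat \<Rightarrow> bool) \<Rightarrow> bool" where
  "undirected_graph m E \<longleftrightarrow>
     (\<forall>i j. E i j \<longrightarrow> i \<in> {1..m} \<and> j \<in> {1..m}) \<and>
     (\<forall>i j. E i j \<longrightarrow> E j i) \<and> (\<forall>i. \<not> E i i)"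

definition connected_graph :: "nat \<Rightarrow> (nat \<Rightarrow> nat \<Rightarrow> bool) \<Rightarrow> bool" where
  "connected_graph m E \<longleftrightarrow> (\<forall>i\<in>{1..m}. \<forall>j\<in>{1..m}. E\<^sup>*\<^sup>* i j)"

definition adj :: "(nat \<Rightarrow> nat \<Rightarrow> bool) \<Rightarrow> nat \<Rightarrow> nat \<Rightarrow> real" where
  "adj E i j = (if E i j then 1 else 0)"

definition degree :: "nat \<Rightarrow> (nat \<Rightarrow> nat \<Rightarrow> bool) \<Rightarrow> nat \<Rightarrow> nat" where
  "degree m E i = card {j\<in>{1..m}. E i j}"

definition max_degree :: "nat \<Rightarrow> (nat \<Rightarrow> nat \<Rightarrow> bool) \<Rightarrow> nat" where
  "max_degree m E = Max (degree m E ` {1..m})"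

fun prio :: "nat \<Rightarrow> (nat \<Rightarrow> nat \<Rightarrow> bool) \<Rightarrow> real \<Rightarrow> (nat \<Rightarrow> nat \<Rightarrow> real)
              \<Rightarrow> nat \<Rightarrow> nat \<Rightarrow> nat \<Rightarrow> real" where
  "prio m E c W0 0 i l = W0 i l"
| "prio m E c W0 (Suc k) i l =
     prio m E c W0 k i l + c * (\<Sum>j=1..m. adj E i j * (prio m E c W0 k j l - prio m E c W0 k i l))"

definition weight :: "nat \<Rightarrow> (nat \<Rightarrow> nat \<Rightarrow> bool) \<Rightarrow> real \<Rightarrow> (nat \<Rightarrow> nat \<Rightarrow> real)
              \<Rightarrow> nat \<Rightarrow> nat \<Rightarrow> nat \<Rightarrow> real" where
  "weight m E c W0 k i j =
     (if E i j then prio m E c W0 k i j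
      else if j = i then prio m E c W0 k i i +
              (\<Sum>l\<in>{l\<in>{1..m}. l \<noteq> i \<and> \<not> E i l}. prio m E c W0 k i l)
      else 0)"

end

theory Submission
  imports Defs
begin

text \<open>Since the adjacency row of agent i sums to its degree d_i, the update reads
  w^i_l(k+1) = (1 - c d_i) w^i_l(k) + c \<Sum>_j h^i_j w^j_l(k), a convex combination because
  c d_i \<le> c \<Delta>_max < 1. Hence any lower bound on column l at time 0 persists, so every
  priority stays at least \<mu>0 > 0, and the diagonal weight only adds nonnegative priorities
  to w^i_i(k).\<close>

lemma sum_adj_eq_degree: "(\<Sum>j=1..m. adj E i j) = real (degree m E i)"
  unfolding adj_def degree_def
  by (simp add: sum.If_cases Int_def conj_commute)

lemma prio_Suc_convex:
  "prio m E c W0 (Suc k) i l =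
     (1 - c * real (degree m E i)) * prio m E c W0 k i l
     + c * (\<Sum>j=1..m. adj E i j * prio m E c W0 k j l)"
proof -
  have sum_diff: "(\<Sum>j=1..m. adj E i j * (prio m E c W0 k j l - prio m E c W0 k i l))
      = (\<Sum>j=1..m. adj E i j * prio m E c W0 k j l) - real (degree m E i) * prio m E c W0 k i l"
    unfolding right_diff_distrib sum_subtractf sum_distrib_right[symmetric] sum_adj_eq_degree
    by (simp add: mult.commute)
  show ?thesis
    unfolding prio.simps(2) sum_diff by (simp add: algebra_simps)
qed

lemma prio_ge_initial_lower_bound:
  assumes "0 \<le> c"
    and step_size: "\<And>i. i \<in> {1..m} \<Longrightarrow> c * real (degree m E i) \<le> 1"
    and initial: "\<And>i. i \<in> {1..m} \<Longrightarrow> \<mu> \<le> W0 i l"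
    and "i \<in> {1..m}"
  shows "\<mu> \<le> prio m E c W0 k i l"
  using \<open>i \<in> {1..m}\<close>
proof (induction k arbitrary: i)
  case 0
  then show ?case using initial by simp
next
  case (Suc k)
  let ?d = "real (degree m E i)" and ?x = "\<lambda>j. prio m E c W0 k j l"
  have "(1 - c * ?d) * \<mu> \<le> (1 - c * ?d) * ?x i"
    using Suc step_size by (simp add: mult_left_mono)
  moreover have "c * (?d * \<mu>) \<le> c * (\<Sum>j=1..m. adj E i j * ?x j)"
  proof -
    have "?d * \<mu> = (\<Sum>j=1..m. adj E i j * \<mu>)"
      unfolding sum_distrib_right[symmetric] sum_adj_eq_degree ..
    also have "\<dots> \<le> (\<Sum>j=1..m. adj E i j * ?x j)"
      using Suc.IH by (intro sum_mono) (simp add: adj_def)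
    finally show ?thesis using \<open>0 \<le> c\<close> by (simp add: mult_left_mono)
  qed
  ultimately show ?case
    unfolding prio_Suc_convex by (simp add: algebra_simps)
qed

lemma step_size_degree_le_1:
  assumes "0 < c" and "c < 1 / real (max_degree m E)" and "i \<in> {1..m}"
  shows "c * real (degree m E i) \<le> 1"
proof -
  have "degree m E i \<le> max_degree m E"
    unfolding max_degree_def using \<open>i \<in> {1..m}\<close> by (auto intro!: Max_ge)
  moreover have "0 < real (max_degree m E)"
    using assms(1,2) by (cases "max_degree m E = 0") auto
  ultimately have "c * real (degree m E i) \<le> c * real (max_degree m E)"
    using \<open>0 < c\<close> by (simp add: mult_left_mono)
  also have "\<dots> < 1"
    using assms(2) \<open>0 < real (max_degree m E)\<close> by (simp add: field_simps)
  finally show ?thesis by simp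
qed

lemma finite_matrix_entries:
  assumes "finite A" and "finite B"
  shows "finite {W i j | i j. i \<in> A \<and> j \<in> B}"
proof -
  have "{W i j | i j. i \<in> A \<and> j \<in> B} = (\<lambda>(i, j). W i j) ` (A \<times> B)"
    by force
  then show ?thesis using assms by simp
qed

theorem lemma3p1:
  fixes m :: nat and E :: "nat \<Rightarrow> nat \<Rightarrow> bool" and c :: real
    and W0 :: "nat \<Rightarrow> nat \<Rightarrow> real"
  assumes "m \<ge> 1"
    and "undirected_graph m E"
    and "connected_graph m E"
    and "0 < c" and "c < 1 / real (max_degree m E)"
    and "\<forall>i\<in>{1..m}. \<forall>j\<in>{1..m}. 0 < W0 i j \<and> W0 i j < 1"
    and "\<forall>i\<in>{1..m}. (\<Sum>j=1..m. W0 i j) = 1"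
  defines "\<mu>0 \<equiv> Min {W0 i j | i j. i \<in> {1..m} \<and> j \<in> {1..m}}"
  shows "(\<forall>k. \<forall>i\<in>{1..m}. weight m E c W0 k i i \<ge> \<mu>0)
       \<and> (\<forall>k. \<forall>i j. E i j \<longrightarrow> weight m E c W0 k i j \<ge> \<mu>0)
       \<and> (\<forall>k. \<forall>i\<in>{1..m}. \<forall>j\<in>{1..m}. j \<noteq> i \<and> \<not> E i j \<longrightarrow> weight m E c W0 k i j = 0)"
proof -
  let ?entries = "{W0 i j | i j. i \<in> {1..m} \<and> j \<in> {1..m}}"
  have finite_entries: "finite ?entries"
    by (rule finite_matrix_entries) simp_all
  have "\<mu>0 \<in> ?entries"
    unfolding \<mu>0_def using \<open>m \<ge> 1\<close> by (intro Min_in finite_entries) auto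
  then have "0 < \<mu>0" using assms(6) by auto
  have prio_ge: "\<mu>0 \<le> prio m E c W0 k i l" if "i \<in> {1..m}" "l \<in> {1..m}" for k i l
    using assms(4,5) that unfolding \<mu>0_def
    by (intro prio_ge_initial_lower_bound step_size_degree_le_1 Min_le finite_entries) auto
  have no_loop: "\<not> E i i" and edge_range: "E i j \<Longrightarrow> i \<in> {1..m} \<and> j \<in> {1..m}" for i j
    using assms(2) unfolding undirected_graph_def by blast+
  have "\<mu>0 \<le> weight m E c W0 k i i" if "i \<in> {1..m}" for k i
  proof -
    have "0 \<le> (\<Sum>l\<in>{l\<in>{1..m}. l \<noteq> i \<and> \<not> E i l}. prio m E c W0 k i l)"
      using prio_ge[OF that] \<open>0 < \<mu>0\<close> by (intro sum_nonneg) (auto intro: order_trans[of 0 \<mu>0])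
    then show ?thesis
      unfolding weight_def using no_loop[of i] prio_ge[OF that that, of k] by simp
  qed
  moreover have "\<mu>0 \<le> weight m E c W0 k i j" if "E i j" for k i j
    unfolding weight_def using that edge_range[OF that] prio_ge by simp
  ultimately show ?thesis
    unfolding weight_def by auto
qed

end
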